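(* Let $\vec d=(\vec a,\vec b)$ be a bidegree sequence of length $n$ with $\sum_i a_i=\sum_i b_i=n\bar c$, with the entries of $\vec a$ in non-increasing order, $m:=\min\vec d$ satisfying $1\le m\le n$, and $\max\vec d\le n$. Suppose there exist an integer $R\in[0..n]$ and a real $\lambda\ge0$ such that $\sum_{i=1}^R a_i=n\lambda$, $\sum_{i=1}^R b_i\le n\lambda$, $\lambda<m$ and $n-n\lambda/m-R\ge1$. Let $M=\max_{i\ge R}\max(a_i,b_i)$ and $k_*=m+\sqrt{m^2+n(\bar c-2m)+Rm}$; let $k=\lceil k_*\rceil$ if $m^2+n(\bar c-2m)+Rm\ge0$ and $k=1$ otherwise. If $$M\le\min\Big(\Big\lfloor\frac{n\bar c-nm-n\lambda+Rm}{k}+m\Big\rfloor,\ n\Big)$$ and either $k\le M$ or $k\le n-n\lambda/m-R$, then $\vec d$ is graphic with loops.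
   Context: A bidegree sequence of length $n$ is a pair $\vec d=(\vec a,\vec b)$ with $\vec a=(a_1,\dots,a_n)\in\mathbb{N}_0^n$ and $\vec b=(b_1,\dots,b_n)\in\mathbb{N}_0^n$. It is graphic with loops if there is an $n\times n$ matrix with entries in $\{0,1\}$ whose $i$th row sum is $a_i$ and whose $i$th column sum is $b_i$ for every $i\in[1..n]$. $\max\vec d$ and $\min\vec d$ denote the maximum and minimum over all $2n$ entries $a_1,\dots,a_n,b_1,\dots,b_n$. The number $\bar c$ (the average degree) is defined by $\sum_i a_i=\sum_i b_i=n\bar c$. For integers $a\le b$, $[a..b]:=\{x\in\mathbb{Z}:a\le x\le b\}$. *)

theory Defs
  imports Complex_Main
begin

text \<open>Bidegree sequences of length n are given by functions a b :: nat => nat,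
  of which only the entries at indices 1..n matter (1-indexed as in the paper).\<close>

definition graphic_with_loops :: "nat \<Rightarrow> (nat \<Rightarrow> nat) \<Rightarrow> (nat \<Rightarrow> nat) \<Rightarrow> bool" where
  "graphic_with_loops n a b \<longleftrightarrow>
     (\<exists>X :: nat \<Rightarrow> nat \<Rightarrow> nat.
        (\<forall>i\<in>{1..n}. \<forall>j\<in>{1..n}. X i j \<in> {0, 1}) \<and>
        (\<forall>i\<in>{1..n}. (\<Sum>j=1..n. X i j) = a i) \<and>
        (\<forall>j\<in>{1..n}. (\<Sum>i=1..n. X i j) = b j))"

definition max_bideg :: "nat \<Rightarrow> (nat \<Rightarrow> nat) \<Rightarrow> (nat \<Rightarrow> nat) \<Rightarrow> nat" where
  "max_bideg n a b = Max (a ` {1..n} \<union> b ` {1..n})"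

definition min_bideg :: "nat \<Rightarrow> (nat \<Rightarrow> nat) \<Rightarrow> (nat \<Rightarrow> nat) \<Rightarrow> nat" where
  "min_bideg n a b = Min (a ` {1..n} \<union> b ` {1..n})"

end

theory Submission
  imports Defs
begin

text \<open>By the Gale--Ryser theorem (for row sums sorted non-increasingly, a 0-1 matrix with
  row sums \<open>a\<close> and column sums \<open>b\<close> exists as soon as the totals agree and
  \<open>\<Sum>i\<le>r. a i \<le> \<Sum>j. min (b j) r\<close> for every \<open>r\<close>) it suffices to check these inequalities.
  For \<open>r \<le> m\<close>, \<open>r \<le> R\<close> or \<open>r \<ge> M\<close> they follow directly from the degree bounds.
  Otherwise \<open>min (b j) r\<close> is bounded below by linear interpolation between \<open>m\<close> and the
  largest possible column degree, so the right-hand side lies above a line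
  \<open>n m + \<kappa> (r - m)\<close>; with \<open>\<kappa> = k\<close> the left-hand side lies below the same line, via
  \<open>T - (n - r) m\<close> when \<open>r \<ge> k\<close> and via \<open>n \<lambda> + (r - R) M\<close> when \<open>r < k\<close>.
  If the radicand of \<open>k\<^sub>*\<close> is negative, interpolating up to \<open>n\<close> already suffices.\<close>

lemma sum_atLeastAtMost_split_first:
  "(\<Sum>i=1..Suc p. f i) = f 1 + (\<Sum>i=1..p. f (Suc i))" for f :: "nat \<Rightarrow> 'a::comm_monoid_add"
  by (induction p) (simp_all add: add.assoc)

lemma sum_atLeastAtMost_split:
  fixes f :: "nat \<Rightarrow> 'a::comm_monoid_add"
  assumes "R \<le> n"
  shows "(\<Sum>i=1..n. f i) = (\<Sum>i=1..R. f i) + (\<Sum>i=Suc R..n. f i)"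
  using assms by (metis Suc_eq_plus1 le_add_diff_inverse sum.ub_add_nat le_add2)

lemma sum_of_bool_mem:
  assumes "finite C" "S \<subseteq> C"
  shows "(\<Sum>j\<in>C. of_bool (j \<in> S)) = card S"
  using assms by (simp add: Int_absorb1)

lemma exists_subset_of_largest:
  fixes b :: "'c \<Rightarrow> 'b::linorder"
  assumes "finite C" "t \<le> card C"
  shows "\<exists>S. S \<subseteq> C \<and> card S = t \<and> (\<forall>j\<in>S. \<forall>j'\<in>C - S. b j' \<le> b j)"
  using assms(2)
proof (induction t)
  case 0
  then show ?case by auto
next
  case (Suc t)
  then obtain S where S: "S \<subseteq> C" "card S = t" "\<forall>j\<in>S. \<forall>j'\<in>C - S. b j' \<le> b j"
    by auto
  have "finite S"
    using S(1) assms(1) finite_subset by blast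
  have "C - S \<noteq> {}"
    using Suc.prems S card_mono[OF \<open>finite S\<close>] by (metis Diff_eq_empty_iff not_less_eq_eq)
  then obtain x where x: "x \<in> C - S" "b x = Max (b ` (C - S))"
    using Max_in[of "b ` (C - S)"] assms(1) by (metis empty_is_image finite_Diff finite_imageI imageE)
  then have "\<forall>y\<in>C - S. b y \<le> b x"
    using assms(1) by simp
  then show ?case
    using S x \<open>finite S\<close> by (intro exI[of _ "insert x S"]) auto
qed

lemma subset_of_largest_positive:
  fixes b :: "'c \<Rightarrow> nat"
  assumes finC: "finite C" and S: "S \<subseteq> C" "\<forall>j\<in>S. \<forall>j'\<in>C - S. b j' \<le> b j"
    and card_le: "card S \<le> (\<Sum>j\<in>C. min (b j) 1)"
  shows "\<forall>j\<in>S. 0 < b j"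
proof (rule ccontr)
  assume "\<not> (\<forall>j\<in>S. 0 < b j)"
  then obtain j0 where j0: "j0 \<in> S" "b j0 = 0"
    by auto
  then have outside_zero: "\<forall>j\<in>C - S. b j = 0"
    using S(2) by fastforce
  have finS: "finite S"
    using S(1) finC finite_subset by blast
  have "(\<Sum>j\<in>C. min (b j) 1) = (\<Sum>j\<in>S. min (b j) 1)"
    using finC S(1) outside_zero by (intro sum.mono_neutral_right) auto
  also have "\<dots> = (\<Sum>j\<in>S - {j0}. min (b j) 1)"
    using j0 finS by (simp add: sum.remove)
  also have "\<dots> \<le> card (S - {j0})"
    using sum_mono[of "S - {j0}" "\<lambda>j. min (b j) 1" "\<lambda>_. 1"] by simp
  also have "\<dots> < card S"
    by (rule card_Diff1_less[OF finS j0(1)])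
  finally show False
    using card_le by simp
qed

lemma gale_ryser_residual_ineq:
  fixes a :: "nat \<Rightarrow> nat" and b :: "'c \<Rightarrow> nat"
  assumes finC: "finite C"
    and S: "S \<subseteq> C" "card S = a 1" and largest: "\<forall>j\<in>S. \<forall>j'\<in>C - S. b j' \<le> b j"
    and pos: "\<forall>j\<in>S. 0 < b j"
    and a_le: "\<forall>i\<in>{1..r}. a (Suc i) \<le> a 1"
    and cond: "(\<Sum>i=1..Suc r. a i) \<le> (\<Sum>j\<in>C. min (b j) (Suc r))"
  shows "(\<Sum>i=1..r. a (Suc i)) \<le> (\<Sum>j\<in>C. min (b j - of_bool (j \<in> S)) r)"
proof (cases "\<exists>j\<in>C - S. r < b j")
  case True
  then obtain j1 where "j1 \<in> C - S" "r < b j1"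
    by blast
  then have "\<forall>j\<in>S. r < b j"
    using largest by (meson less_le_trans)
  then have "\<forall>j\<in>S. min (b j - of_bool (j \<in> S)) r = r"
    by auto
  then have "(\<Sum>j\<in>S. min (b j - of_bool (j \<in> S)) r) = a 1 * r"
    using S(2) by simp
  moreover have "(\<Sum>i=1..r. a (Suc i)) \<le> (\<Sum>i=1..r. a 1)"
    using a_le by (intro sum_mono) auto
  moreover have "(\<Sum>j\<in>S. min (b j - of_bool (j \<in> S)) r) \<le> (\<Sum>j\<in>C. min (b j - of_bool (j \<in> S)) r)"
    using S(1) finC by (intro sum_mono2) auto
  ultimately show ?thesis
    by (simp add: mult.commute)
next
  case False
  then have small: "b j \<le> r" if "j \<in> C - S" for j
    using that by (simp add: not_less)
  have "min (b j - of_bool (j \<in> S)) r + of_bool (j \<in> S) = min (b j) (Suc r)" if "j \<in> C" for j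
    using pos small[of j] that by (cases "j \<in> S") auto
  then have "(\<Sum>j\<in>C. min (b j) (Suc r))
      = (\<Sum>j\<in>C. min (b j - of_bool (j \<in> S)) r) + (\<Sum>j\<in>C. of_bool (j \<in> S))"
    by (simp add: sum.distrib[symmetric])
  also have "\<dots> = (\<Sum>j\<in>C. min (b j - of_bool (j \<in> S)) r) + a 1"
    using sum_of_bool_mem[OF finC S(1)] S(2) by simp
  finally show ?thesis
    using cond sum_atLeastAtMost_split_first[of a r] by simp
qed

lemma zero_one_matrix_add_first_row:
  fixes a :: "nat \<Rightarrow> nat" and b b' :: "'c \<Rightarrow> nat"
  assumes finC: "finite C" and S: "S \<subseteq> C" "card S = a 1"
    and b_eq: "\<And>j. j \<in> C \<Longrightarrow> b' j + of_bool (j \<in> S) = b j"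
    and "\<exists>X. (\<forall>i\<in>{1..p}. \<forall>j\<in>C. X i j \<in> {0, 1}) \<and>
      (\<forall>i\<in>{1..p}. (\<Sum>j\<in>C. X i j) = a (Suc i)) \<and> (\<forall>j\<in>C. (\<Sum>i=1..p. X i j) = b' j)"
  shows "\<exists>X. (\<forall>i\<in>{1..Suc p}. \<forall>j\<in>C. X i j \<in> {0, 1}) \<and>
      (\<forall>i\<in>{1..Suc p}. (\<Sum>j\<in>C. X i j) = a i) \<and> (\<forall>j\<in>C. (\<Sum>i=1..Suc p. X i j) = b j)"
proof -
  obtain X' where X': "\<forall>i\<in>{1..p}. \<forall>j\<in>C. X' i j \<in> {0, 1}"
      "\<forall>i\<in>{1..p}. (\<Sum>j\<in>C. X' i j) = a (Suc i)" "\<forall>j\<in>C. (\<Sum>i=1..p. X' i j) = b' j"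
    using assms(5) by blast
  define X where "X i j = (if i = 1 then of_bool (j \<in> S) else X' (i - 1) j)" for i j
  have lower_row: "i - 1 \<in> {1..p}" if "i \<in> {1..Suc p}" "i \<noteq> 1" for i
    using that by auto
  have "\<forall>i\<in>{1..Suc p}. \<forall>j\<in>C. X i j \<in> {0, 1}"
  proof (intro ballI)
    fix i j assume "i \<in> {1..Suc p}" "j \<in> C"
    then show "X i j \<in> {0, 1}"
      using X'(1) lower_row by (cases "i = 1") (auto simp: X_def)
  qed
  moreover have "\<forall>i\<in>{1..Suc p}. (\<Sum>j\<in>C. X i j) = a i"
  proof
    fix i assume "i \<in> {1..Suc p}"
    then show "(\<Sum>j\<in>C. X i j) = a i"
      using X'(2) lower_row sum_of_bool_mem[OF finC S(1)] S(2)
      by (cases "i = 1") (auto simp: X_def)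
  qed
  moreover have "(\<Sum>i=1..Suc p. X i j) = b j" if "j \<in> C" for j
    using X'(3) that b_eq[OF that] sum_atLeastAtMost_split_first[of "\<lambda>i. X i j" p]
    by (simp add: X_def)
  ultimately show ?thesis
    by blast
qed

theorem gale_ryser_sufficient:
  fixes a :: "nat \<Rightarrow> nat" and b :: "'c \<Rightarrow> nat"
  assumes "finite C"
    and "\<forall>i j. 1 \<le> i \<and> i \<le> j \<and> j \<le> p \<longrightarrow> a j \<le> a i"
    and "(\<Sum>i=1..p. a i) = (\<Sum>j\<in>C. b j)"
    and "\<forall>r\<in>{1..p}. (\<Sum>i=1..r. a i) \<le> (\<Sum>j\<in>C. min (b j) r)"
  shows "\<exists>X. (\<forall>i\<in>{1..p}. \<forall>j\<in>C. X i j \<in> {0, 1}) \<and>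
    (\<forall>i\<in>{1..p}. (\<Sum>j\<in>C. X i j) = a i) \<and> (\<forall>j\<in>C. (\<Sum>i=1..p. X i j) = b j)"
  using assms(2-)
proof (induction p arbitrary: a b)
  case 0
  then have "\<forall>j\<in>C. b j = 0"
    using assms(1) by simp
  then show ?case
    by (intro exI[of _ "\<lambda>_ _. 0"]) auto
next
  case (Suc p)
  note sorted = Suc.prems(1) and sums = Suc.prems(2) and cond = Suc.prems(3)
  have cond_1: "a 1 \<le> (\<Sum>j\<in>C. min (b j) 1)"
    using cond[rule_format, of 1] by simp
  also have "\<dots> \<le> card C"
    using sum_mono[of C "\<lambda>j. min (b j) 1" "\<lambda>_. 1"] by simp
  finally obtain S where S: "S \<subseteq> C" "card S = a 1" and largest: "\<forall>j\<in>S. \<forall>j'\<in>C - S. b j' \<le> b j"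
    using exists_subset_of_largest[OF assms(1)] by meson
  have pos: "\<forall>j\<in>S. 0 < b j"
    using subset_of_largest_positive[OF assms(1) S(1) largest] S(2) cond_1 by simp
  \<comment> \<open>Row 1 is placed on the \<open>a 1\<close> columns of largest degree; the rest is the residual problem.\<close>
  define b' where "b' j = b j - of_bool (j \<in> S)" for j
  have b'_add: "b' j + of_bool (j \<in> S) = b j" if "j \<in> C" for j
    using pos by (cases "j \<in> S") (auto simp: b'_def)
  have "(\<Sum>j\<in>C. b j) = (\<Sum>j\<in>C. b' j) + (\<Sum>j\<in>C. of_bool (j \<in> S))"
    using b'_add by (simp add: sum.distrib[symmetric])
  also have "\<dots> = (\<Sum>j\<in>C. b' j) + a 1"
    using sum_of_bool_mem[OF assms(1) S(1)] S(2) by simp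
  finally have "(\<Sum>j\<in>C. b j) = (\<Sum>j\<in>C. b' j) + a 1" .
  then have "(\<Sum>i=1..p. a (Suc i)) = (\<Sum>j\<in>C. b' j)"
    using sums sum_atLeastAtMost_split_first[of a p] by simp
  moreover have "\<forall>r\<in>{1..p}. (\<Sum>i=1..r. a (Suc i)) \<le> (\<Sum>j\<in>C. min (b' j) r)"
  proof
    fix r assume r: "r \<in> {1..p}"
    show "(\<Sum>i=1..r. a (Suc i)) \<le> (\<Sum>j\<in>C. min (b' j) r)"
      unfolding b'_def
    proof (rule gale_ryser_residual_ineq[where a = a, OF assms(1) S largest pos])
      show "\<forall>i\<in>{1..r}. a (Suc i) \<le> a 1"
        using sorted r by auto
      show "(\<Sum>i=1..Suc r. a i) \<le> (\<Sum>j\<in>C. min (b j) (Suc r))"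
        using cond[rule_format, of "Suc r"] r by simp
    qed
  qed
  moreover have "\<forall>i j. 1 \<le> i \<and> i \<le> j \<and> j \<le> p \<longrightarrow> a (Suc j) \<le> a (Suc i)"
    using sorted by auto
  ultimately have "\<exists>X. (\<forall>i\<in>{1..p}. \<forall>j\<in>C. X i j \<in> {0, 1}) \<and>
      (\<forall>i\<in>{1..p}. (\<Sum>j\<in>C. X i j) = a (Suc i)) \<and> (\<forall>j\<in>C. (\<Sum>i=1..p. X i j) = b' j)"
    using Suc.IH[of "\<lambda>i. a (Suc i)" b'] by blast
  then show ?case
    using zero_one_matrix_add_first_row[where a = a and b = b, OF assms(1) S b'_add] by blast
qed

lemma min_ge_interpolation:
  fixes m x r X :: real
  assumes "m \<le> x" "x \<le> X" "m \<le> r" "r \<le> X" "m < X"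
  shows "m + (x - m) * (r - m) / (X - m) \<le> min x r"
proof (cases "x \<le> r")
  case True
  have "(x - m) * (r - m) \<le> (x - m) * (X - m)"
    using assms by (intro mult_left_mono) auto
  then have "(x - m) * (r - m) / (X - m) \<le> x - m"
    using assms by (simp add: divide_le_eq)
  then show ?thesis
    using True by simp
next
  case False
  have "(x - m) * (r - m) \<le> (X - m) * (r - m)"
    using assms by (intro mult_right_mono) auto
  then have "(x - m) * (r - m) / (X - m) \<le> r - m"
    using assms by (simp add: divide_le_eq mult.commute)
  then show ?thesis
    using False by simp
qed

lemma sum_min_ge_interpolation:
  fixes b :: "'c \<Rightarrow> nat" and m r :: nat and X :: real
  assumes "finite A" "\<And>j. j \<in> A \<Longrightarrow> m \<le> b j" "\<And>j. j \<in> A \<Longrightarrow> real (b j) \<le> X"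
    and "m \<le> r" "real r \<le> X" "real m < X"
  shows "card A * real m + (real r - m) / (X - m) * (real (\<Sum>j\<in>A. b j) - card A * real m)
    \<le> real (\<Sum>j\<in>A. min (b j) r)"
proof -
  have "real (\<Sum>j\<in>A. b j) - card A * real m = (\<Sum>j\<in>A. real (b j) - m)"
    by (simp add: sum_subtractf)
  then have "card A * real m + (real r - m) / (X - m) * (real (\<Sum>j\<in>A. b j) - card A * real m)
      = (\<Sum>j\<in>A. m + (real (b j) - m) * (real r - m) / (X - m))"
    by (simp add: sum.distrib sum_distrib_left sum_divide_distrib mult.commute)
  also have "\<dots> \<le> (\<Sum>j\<in>A. min (real (b j)) (real r))"
    using assms by (intro sum_mono min_ge_interpolation) auto
  finally show ?thesis
    by (simp add: of_nat_min)
qed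

lemma partial_sum_bound_le_slope_line:
  fixes k m n lam M R r :: real
  assumes M: "k * M \<le> k\<^sup>2 - k * m + (n * m - n * lam)" and k: "k * m \<le> n * m - n * lam"
    and r: "R \<le> r" "r < k" and "0 \<le> R" "0 < k"
  shows "n * lam + (r - R) * M \<le> n * m + k * (r - m)"
proof -
  have "(r - R) * (k * M) \<le> (r - R) * (k\<^sup>2 - k * m + (n * m - n * lam))"
    using M r by (intro mult_left_mono) auto
  moreover have "0 \<le> (k - (r - R)) * ((n * m - n * lam) - k * m)"
    using k r assms(5) by (intro mult_nonneg_nonneg) auto
  moreover have "0 \<le> k\<^sup>2 * R"
    using assms(5) by simp
  ultimately have "k * (n * lam + (r - R) * M) \<le> k * (n * m + k * (r - m))"
    by (simp add: power2_eq_square algebra_simps)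
  then show ?thesis
    using assms(6) by simp
qed

locale bounded_bidegree =
  fixes n m R M T :: nat and a b :: "nat \<Rightarrow> nat" and lam :: real
  assumes a_ge: "\<And>i. i \<in> {1..n} \<Longrightarrow> m \<le> a i" and b_ge: "\<And>j. j \<in> {1..n} \<Longrightarrow> m \<le> b j"
    and a_le: "\<And>i. i \<in> {1..n} \<Longrightarrow> a i \<le> n" and b_le: "\<And>j. j \<in> {1..n} \<Longrightarrow> b j \<le> n"
    and a_le_M: "\<And>i. i \<in> {1..n} \<Longrightarrow> R \<le> i \<Longrightarrow> a i \<le> M"
    and b_le_M: "\<And>j. j \<in> {1..n} \<Longrightarrow> R \<le> j \<Longrightarrow> b j \<le> M"
    and total_a: "(\<Sum>i=1..n. a i) = T" and total_b: "(\<Sum>j=1..n. b j) = T"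
    and sum_a_upto_R: "real (\<Sum>i=1..R. a i) = n * lam"
    and sum_b_upto_R: "real (\<Sum>j=1..R. b j) \<le> n * lam"
    and R_le: "R \<le> n" and lam_less: "lam < m" and m_pos: "0 < m"
begin

text \<open>\<open>T\<close> stands for \<open>n * cbar\<close>, so \<open>disc\<close> is the radicand \<open>m\<^sup>2 + n (cbar - 2 m) + R m\<close> of \<open>k\<^sub>*\<close>.\<close>

definition disc :: real where
  "disc = real m ^ 2 + real T - 2 * real n * real m + real R * real m"

text \<open>The conditions on \<open>k\<close> under which the line \<open>r \<mapsto> n m + k (r - m)\<close> separates the two
  sides of the Gale--Ryser inequality for \<open>m < r < M\<close>, \<open>R < r\<close>.\<close>

definition admissible_slope :: "real \<Rightarrow> bool" where
  "admissible_slope k \<longleftrightarrow> disc \<le> (k - real m)\<^sup>2 \<and> real m \<le> k \<and>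
     k * (real M - real m) \<le> real T - real n * lam - (real n - real R) * real m \<and>
     k * real m \<le> real n * real m - real n * lam"

lemma n_lam_le_n_m: "real n * lam \<le> real n * real m"
  using lam_less by (simp add: mult_left_mono)

lemma sum_a_upto_le:
  assumes "r \<le> n"
  shows "real (\<Sum>i=1..r. a i) \<le> real T - (real n - r) * m"
proof -
  have "(\<Sum>i=Suc r..n. m) \<le> (\<Sum>i=Suc r..n. a i)"
    using a_ge by (intro sum_mono) auto
  then have "(n - r) * m \<le> (\<Sum>i=Suc r..n. a i)"
    by simp
  then have "real ((n - r) * m) \<le> real (\<Sum>i=Suc r..n. a i)"
    by (simp only: of_nat_le_iff)
  then have "(real n - r) * m \<le> real (\<Sum>i=Suc r..n. a i)"
    using assms by simp
  moreover have "T = (\<Sum>i=1..r. a i) + (\<Sum>i=Suc r..n. a i)"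
    using total_a sum_atLeastAtMost_split[OF assms, of a] by simp
  ultimately show ?thesis
    by simp
qed

lemma gale_ryser_ineq_le_m:
  assumes "r \<le> m" "r \<le> n"
  shows "(\<Sum>i=1..r. a i) \<le> (\<Sum>j=1..n. min (b j) r)"
proof -
  have "(\<Sum>i=1..r. a i) \<le> (\<Sum>i=1..r. n)"
    using a_le assms by (intro sum_mono) auto
  also have "\<dots> = (\<Sum>j=1..n. r)"
    by simp
  also have "\<dots> = (\<Sum>j=1..n. min (b j) r)"
  proof (rule sum.cong)
    fix j assume "j \<in> {1..n}"
    then show "r = min (b j) r"
      using b_ge assms(1) by (simp add: min_absorb2 le_trans)
  qed simp
  finally show ?thesis .
qed

lemma gale_ryser_ineq_le_R:
  assumes "m \<le> r" "r \<le> R"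
  shows "(\<Sum>i=1..r. a i) \<le> (\<Sum>j=1..n. min (b j) r)"
proof -
  have "real (\<Sum>i=1..r. a i) \<le> real (\<Sum>i=1..R. a i)"
    using assms by (simp add: sum_mono2)
  also have "\<dots> \<le> n * m"
    using sum_a_upto_R n_lam_le_n_m by simp
  also have "\<dots> = real (\<Sum>j=1..n. m)"
    by simp
  also have "(\<Sum>j=1..n. m) \<le> (\<Sum>j=1..n. min (b j) r)"
    using b_ge assms(1) by (intro sum_mono) simp
  then have "real (\<Sum>j=1..n. m) \<le> real (\<Sum>j=1..n. min (b j) r)"
    by (simp only: of_nat_le_iff)
  finally show ?thesis
    by (simp only: of_nat_le_iff)
qed

lemma gale_ryser_ineq_disc_neg:
  assumes "m < r" "r \<le> n" "disc < 0"
  shows "(\<Sum>i=1..r. a i) \<le> (\<Sum>j=1..n. min (b j) r)"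
proof -
  have "n * real m + (real r - m) / (real n - m) * (real T - n * real m)
      \<le> real (\<Sum>j=1..n. min (b j) r)"
    using sum_min_ge_interpolation[of "{1..n}" m b "real n" r, unfolded total_b] b_ge b_le assms
    by simp
  moreover have "real T - n * real m - (real n - m) * m = disc - real R * real m"
    by (simp add: disc_def power2_eq_square algebra_simps)
  then have "real T - n * real m \<le> (real n - m) * m"
    using assms(3) zero_le_mult_iff[of "real R" "real m"] by linarith
  then have "(real T - n * real m) * (real n - r) \<le> (real n - m) * m * (real n - r)"
    using assms by (intro mult_right_mono) auto
  then have "real T - (real n - r) * m \<le> n * real m + (real r - m) / (real n - m) * (real T - n * real m)"
    using assms by (simp add: field_simps)
  ultimately have "real (\<Sum>i=1..r. a i) \<le> real (\<Sum>j=1..n. min (b j) r)"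
    using sum_a_upto_le[OF assms(2)] by linarith
  then show ?thesis
    by (simp only: of_nat_le_iff)
qed

lemma sum_b_large_columns_le:
  assumes "M \<le> r" "r \<le> n"
  defines "J \<equiv> {j \<in> {1..n}. r < b j}"
  shows "real (\<Sum>j\<in>J. b j) \<le> card J * real r + (real n - r) * m"
proof (cases "card J \<le> m")
  case True
  have "(\<Sum>j\<in>J. b j) \<le> (\<Sum>j\<in>J. n)"
    unfolding J_def by (intro sum_mono b_le) blast
  then have "(\<Sum>j\<in>J. b j) \<le> card J * n"
    by simp
  then have "real (\<Sum>j\<in>J. b j) \<le> card J * real n"
    by (metis of_nat_le_iff of_nat_mult)
  moreover have "card J * (real n - r) \<le> m * (real n - r)"
    using True assms by (intro mult_right_mono) auto
  ultimately show ?thesis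
    by (simp add: algebra_simps)
next
  case False
  \<comment> \<open>Columns exceeding \<open>r \<ge> M\<close> lie among the first \<open>R\<close>, whose total is at most \<open>n * lam\<close>.\<close>
  have "J \<subseteq> {1..R}"
  proof
    fix j assume "j \<in> J"
    then have "j \<in> {1..n}" "M < b j"
      using assms(1) by (auto simp: J_def)
    then show "j \<in> {1..R}"
      using b_le_M[of j] by (cases "R \<le> j") auto
  qed
  then have "(\<Sum>j\<in>J. b j) \<le> (\<Sum>j=1..R. b j)"
    by (intro sum_mono2) auto
  then have "real (\<Sum>j\<in>J. b j) \<le> real (\<Sum>j=1..R. b j)"
    by (simp only: of_nat_le_iff)
  then have "real (\<Sum>j\<in>J. b j) \<le> n * real m"
    using sum_b_upto_R n_lam_le_n_m by linarith
  also have "\<dots> = m * real r + (real n - r) * m"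
    by (simp add: algebra_simps)
  also have "\<dots> \<le> card J * real r + (real n - r) * m"
    using False by (intro add_right_mono mult_right_mono) auto
  finally show ?thesis .
qed

lemma gale_ryser_ineq_ge_M:
  assumes "M \<le> r" "r \<le> n"
  shows "(\<Sum>i=1..r. a i) \<le> (\<Sum>j=1..n. min (b j) r)"
proof -
  define J where "J = {j \<in> {1..n}. r < b j}"
  have J_sub: "J \<subseteq> {1..n}"
    by (auto simp: J_def)
  have "(\<Sum>j=1..n. min (b j) r) = (\<Sum>j\<in>{1..n} - J. min (b j) r) + (\<Sum>j\<in>J. min (b j) r)"
    by (rule sum.subset_diff[OF J_sub finite_atLeastAtMost])
  also have "(\<Sum>j\<in>{1..n} - J. min (b j) r) = (\<Sum>j\<in>{1..n} - J. b j)"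
    by (intro sum.cong) (auto simp: J_def)
  also have "(\<Sum>j\<in>J. min (b j) r) = card J * r"
    by (simp add: J_def)
  finally have "(\<Sum>j=1..n. min (b j) r) = (\<Sum>j\<in>{1..n} - J. b j) + card J * r" .
  moreover have "T = (\<Sum>j\<in>{1..n} - J. b j) + (\<Sum>j\<in>J. b j)"
    using sum.subset_diff[OF J_sub finite_atLeastAtMost, of b] total_b by simp
  ultimately have "real (\<Sum>i=1..r. a i) \<le> real (\<Sum>j=1..n. min (b j) r)"
    using sum_a_upto_le[OF assms(2)] sum_b_large_columns_le[OF assms] unfolding J_def by simp
  then show ?thesis
    by (simp only: of_nat_le_iff)
qed

lemma slope_line_le_sum_min:
  assumes k: "admissible_slope k" and r: "m < r" "r \<le> M"
  shows "n * real m + k * (real r - m) \<le> real (\<Sum>j=1..n. min (b j) r)"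
proof -
  define c where "c = (real r - m) / (real M - m)"
  define B where "B = real (\<Sum>j=Suc R..n. b j) - (real n - R) * m"
  have "(\<Sum>j=1..R. m) \<le> (\<Sum>j=1..R. min (b j) r)"
    using b_ge R_le r(1) by (intro sum_mono) simp
  then have "real (\<Sum>j=1..R. m) \<le> real (\<Sum>j=1..R. min (b j) r)"
    by (simp only: of_nat_le_iff)
  then have first: "R * real m \<le> real (\<Sum>j=1..R. min (b j) r)"
    by simp
  have rest: "(real n - R) * m + c * B \<le> real (\<Sum>j=Suc R..n. min (b j) r)"
    using sum_min_ge_interpolation[of "{Suc R..n}" m b "real M" r] b_ge b_le_M R_le r
    by (simp add: c_def B_def)
  have "T = (\<Sum>j=1..R. b j) + (\<Sum>j=Suc R..n. b j)"
    using sum_atLeastAtMost_split[OF R_le, of b] total_b by simp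
  then have "k * (real M - m) \<le> B"
    using k sum_b_upto_R unfolding admissible_slope_def B_def by linarith
  then have "c * (k * (real M - m)) \<le> c * B"
    using r by (intro mult_left_mono) (auto simp: c_def)
  moreover have "c * (k * (real M - m)) = k * (real r - m)"
    using r by (simp add: c_def)
  moreover have "real (\<Sum>j=1..n. min (b j) r) = real (\<Sum>j=1..R. min (b j) r) + real (\<Sum>j=Suc R..n. min (b j) r)"
    using sum_atLeastAtMost_split[OF R_le, of "\<lambda>j. min (b j) r"] by simp
  moreover have "n * real m = R * real m + (real n - R) * m"
    by (simp add: algebra_simps)
  ultimately show ?thesis
    using first rest by linarith
qed

lemma sum_a_le_slope_line:
  assumes k: "admissible_slope k" and r: "R \<le> r" "r \<le> n"
  shows "real (\<Sum>i=1..r. a i) \<le> n * real m + k * (real r - m)"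
proof (cases "k \<le> r")
  case True
  have "0 \<le> (k - m) * (real r - k)"
    using k True by (simp add: admissible_slope_def)
  moreover have "0 \<le> real R * real m"
    by simp
  moreover have "n * real m + k * (real r - m) - (real T - (real n - r) * m)
      = ((k - m)\<^sup>2 - disc) + (k - m) * (real r - k) + R * real m"
    by (simp add: disc_def power2_eq_square algebra_simps)
  ultimately have "real T - (real n - r) * m \<le> n * real m + k * (real r - m)"
    using k unfolding admissible_slope_def by linarith
  then show ?thesis
    using sum_a_upto_le[OF r(2)] by linarith
next
  case False
  have "(\<Sum>i=Suc R..r. a i) \<le> (\<Sum>i=Suc R..r. M)"
    using r by (intro sum_mono a_le_M) auto
  then have "(\<Sum>i=Suc R..r. a i) \<le> (r - R) * M"
    by simp
  then have "real (\<Sum>i=Suc R..r. a i) \<le> real ((r - R) * M)"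
    by (simp only: of_nat_le_iff)
  then have "real (\<Sum>i=Suc R..r. a i) \<le> (real r - R) * M"
    using r(1) by simp
  moreover have "real (\<Sum>i=1..r. a i) = real (\<Sum>i=1..R. a i) + real (\<Sum>i=Suc R..r. a i)"
    using sum_atLeastAtMost_split[OF r(1), of a] by simp
  ultimately have "real (\<Sum>i=1..r. a i) \<le> n * lam + (real r - R) * M"
    using sum_a_upto_R by linarith
  also have "\<dots> \<le> n * real m + k * (real r - m)"
  proof (rule partial_sum_bound_le_slope_line)
    have "real T - n * lam - (real n - R) * m \<le> k\<^sup>2 - 2 * k * m + (n * real m - n * lam)"
      using k unfolding admissible_slope_def disc_def by (simp add: power2_eq_square algebra_simps)
    then show "k * M \<le> k\<^sup>2 - k * m + (n * real m - n * lam)"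
      using k unfolding admissible_slope_def by (simp add: algebra_simps)
    show "0 < k"
      using k m_pos unfolding admissible_slope_def by linarith
  qed (use k r False in \<open>auto simp: admissible_slope_def\<close>)
  finally show ?thesis .
qed

lemma gale_ryser_ineq:
  assumes k: "0 \<le> disc \<Longrightarrow> admissible_slope k" and r: "r \<le> n"
  shows "(\<Sum>i=1..r. a i) \<le> (\<Sum>j=1..n. min (b j) r)"
proof -
  consider "r \<le> m" | "m < r" "r \<le> R" | "m < r" "disc < 0" | "M \<le> r"
    | "m < r" "R < r" "r < M" "0 \<le> disc"
    by linarith
  then show ?thesis
  proof cases
    case 5
    then have "admissible_slope k"
      using k by blast
    then have "real (\<Sum>i=1..r. a i) \<le> real (\<Sum>j=1..n. min (b j) r)"
      using sum_a_le_slope_line slope_line_le_sum_min 5 r by (meson less_imp_le order.trans)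
    then show ?thesis
      by (simp only: of_nat_le_iff)
  qed (use r gale_ryser_ineq_le_m gale_ryser_ineq_le_R gale_ryser_ineq_disc_neg
      gale_ryser_ineq_ge_M in auto)
qed

lemma admissible_slopeI:
  fixes k :: real
  assumes disc: "0 \<le> disc" "m + sqrt disc \<le> k"
    and M_le: "M \<le> (real T - n * real m - n * lam + R * real m) / k + m"
    and alt: "k \<le> M \<or> k \<le> real n - n * lam / m - R"
  shows "admissible_slope k"
proof -
  have "0 \<le> sqrt disc"
    using disc(1) by simp
  then have k_ge: "real m \<le> k"
    using disc(2) by linarith
  have "(sqrt disc)\<^sup>2 \<le> (k - m)\<^sup>2"
    using disc(2) \<open>0 \<le> sqrt disc\<close> by (intro power_mono) auto
  then have disc_le: "disc \<le> (k - m)\<^sup>2"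
    using disc(1) by simp
  have k_pos: "0 < k"
    using k_ge m_pos by linarith
  have "k * (real M - m) \<le> k * ((real T - n * real m - n * lam + R * real m) / k)"
    using M_le k_pos by (intro mult_left_mono) auto
  also have "\<dots> = real T - n * real m - n * lam + R * real m"
    using k_pos by simp
  also have "\<dots> = real T - n * lam - (real n - R) * m"
    by (simp add: algebra_simps)
  finally have M_bound: "k * (real M - m) \<le> real T - n * lam - (real n - R) * m" .
  have "k * m \<le> n * real m - n * lam"
    using alt
  proof
    assume "k \<le> M"
    then have "k * (k - m) \<le> k * (real M - m)"
      using k_pos by (intro mult_left_mono) auto
    moreover have "n * real m - n * lam - k * m = (k - m)\<^sup>2 - disc + (real T - n * lam - (real n - R) * m) - k * (k - m)"
      by (simp add: disc_def power2_eq_square algebra_simps)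
    ultimately show ?thesis
      using M_bound disc_le by linarith
  next
    assume "k \<le> real n - n * lam / m - R"
    then have "k * m \<le> (real n - n * lam / m - R) * m"
      using m_pos by (intro mult_right_mono) auto
    also have "\<dots> = n * real m - n * lam - R * real m"
      using m_pos by (simp add: algebra_simps)
    finally show ?thesis
      using mult_nonneg_nonneg[of "real R" "real m"] by linarith
  qed
  then show ?thesis
    using k_ge disc_le M_bound unfolding admissible_slope_def by blast
qed

end

lemma min_bideg_le:
  assumes "i \<in> {1..n}"
  shows "min_bideg n a b \<le> a i" "min_bideg n a b \<le> b i"
  using assms unfolding min_bideg_def by simp_all

lemma max_bideg_ge:
  assumes "i \<in> {1..n}"
  shows "a i \<le> max_bideg n a b" "b i \<le> max_bideg n a b"
  using assms unfolding max_bideg_def by simp_all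

lemma bounded_bidegreeI:
  fixes lam :: real
  assumes "1 \<le> min_bideg n a b" "max_bideg n a b \<le> n" "R \<le> n"
    and "(\<Sum>i=1..n. a i) = T" "(\<Sum>j=1..n. b j) = T"
    and "real (\<Sum>i=1..R. a i) = n * lam" "real (\<Sum>j=1..R. b j) \<le> n * lam"
    and "lam < min_bideg n a b"
  shows "bounded_bidegree n (min_bideg n a b) R (Max {max (a i) (b i) | i. i \<in> {1..n} \<and> R \<le> i}) T a b lam"
proof
  fix i assume i: "i \<in> {1..n}"
  show "min_bideg n a b \<le> a i" "min_bideg n a b \<le> b i"
    using min_bideg_le[OF i] by simp_all
  show "a i \<le> n" "b i \<le> n"
    using max_bideg_ge[OF i, where a = a and b = b] assms(2) by simp_all
  have "max (a i) (b i) \<le> Max {max (a i) (b i) | i. i \<in> {1..n} \<and> R \<le> i}" if "R \<le> i"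
    using i that by (intro Max_ge) auto
  then show "a i \<le> Max {max (a i) (b i) | i. i \<in> {1..n} \<and> R \<le> i}"
    "b i \<le> Max {max (a i) (b i) | i. i \<in> {1..n} \<and> R \<le> i}" if "R \<le> i"
    using that by simp_all
qed (use assms in simp_all)

lemma graphic_with_loops_if_gale_ryser:
  assumes "\<forall>i j. 1 \<le> i \<and> i \<le> j \<and> j \<le> n \<longrightarrow> a j \<le> a i"
    and "(\<Sum>i=1..n. a i) = (\<Sum>j=1..n. b j)"
    and "\<forall>r\<in>{1..n}. (\<Sum>i=1..r. a i) \<le> (\<Sum>j=1..n. min (b j) r)"
  shows "graphic_with_loops n a b"
  using gale_ryser_sufficient[OF finite_atLeastAtMost assms]
  unfolding graphic_with_loops_def by blast

theorem corollary5:
  fixes n :: nat and a b :: "nat \<Rightarrow> nat" and cbar :: real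
    and R :: nat and lam :: real and M m :: nat and D :: real and k :: int
  assumes sum_a: "real (\<Sum>i=1..n. a i) = real n * cbar"
    and sum_b: "real (\<Sum>i=1..n. b i) = real n * cbar"
    and nonincr: "\<forall>i j. 1 \<le> i \<and> i \<le> j \<and> j \<le> n \<longrightarrow> a j \<le> a i"
    and m_ge: "1 \<le> min_bideg n a b" and m_le: "min_bideg n a b \<le> n"
    and max_le: "max_bideg n a b \<le> n"
    and R_le: "R \<le> n"
    and lam_ge: "lam \<ge> 0"
    and sumR_a: "real (\<Sum>i=1..R. a i) = real n * lam"
    and sumR_b: "real (\<Sum>i=1..R. b i) \<le> real n * lam"
    and lam_lt: "lam < real (min_bideg n a b)"
    and gap: "real n - real n * lam / real (min_bideg n a b) - real R \<ge> 1"
    and M_def: "M = Max {max (a i) (b i) | i. i \<in> {1..n} \<and> R \<le> i}"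
    and m_def: "m = min_bideg n a b"
    and D_def: "D = real m ^ 2 + real n * (cbar - 2 * real m) + real R * real m"
    and k_def: "k = (if D \<ge> 0 then \<lceil>real m + sqrt D\<rceil> else (1::int))"
    and M_bound: "int M \<le> min \<lfloor>(real n * cbar - real n * real m - real n * lam + real R * real m) / real_of_int k + real m\<rfloor> (int n)"
    and alt: "k \<le> int M \<or> real_of_int k \<le> real n - real n * lam / real m - real R"
  shows "graphic_with_loops n a b"
proof -
  define T where "T = (\<Sum>i=1..n. a i)"
  have sums_eq: "(\<Sum>i=1..n. a i) = (\<Sum>j=1..n. b j)"
    using sum_a sum_b by (metis of_nat_eq_iff)
  interpret bounded_bidegree n m R M T a b lam
    unfolding m_def M_def
    by (rule bounded_bidegreeI)
      (use m_ge max_le R_le sums_eq sumR_a sumR_b lam_lt in \<open>simp_all add: T_def\<close>)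
  have T_eq: "real T = n * cbar"
    unfolding T_def by (fact sum_a)
  have disc_eq: "disc = D"
    unfolding disc_def D_def using T_eq by (simp add: algebra_simps)
  have "admissible_slope k" if "0 \<le> disc"
  proof (rule admissible_slopeI)
    show "real m + sqrt disc \<le> real_of_int k"
      using that disc_eq k_def by simp
    have "int M \<le> \<lfloor>(n * cbar - n * real m - n * lam + R * real m) / real_of_int k + m\<rfloor>"
      using M_bound by simp
    then show "real M \<le> (real T - n * real m - n * lam + R * real m) / real_of_int k + m"
      unfolding le_floor_iff T_eq by simp
    show "real_of_int k \<le> M \<or> real_of_int k \<le> real n - n * lam / m - R"
      using alt by linarith
  qed (fact that)
  then have "\<forall>r\<in>{1..n}. (\<Sum>i=1..r. a i) \<le> (\<Sum>j=1..n. min (b j) r)"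
    using gale_ryser_ineq[of "real_of_int k"] by simp
  then show ?thesis
    by (rule graphic_with_loops_if_gale_ryser[OF nonincr sums_eq])
qed

end
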